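(* Let $k$ be an algebraically closed field of characteristic $p$ and $\pi: X\to Y$ a $\mathbb Z/p$-cover of smooth projective curves over $k$. Suppose that $y$ is an Artin–Schreier generator of $\pi$ in global standard form. Then $z := y^{p-1}$ is a magical element for $\pi$, i.e. $\mathrm{ord}_P(z)\ge -d'_P$ for every $P\in X(k)$ and $\mathrm{tr}_{k(X)/k(Y)}(z)\ne 0$; moreover, the dual of $z$ with respect to the trace pairing is $z^\vee := z-2$, i.e. $\mathrm{tr}_{k(X)/k(Y)}(g_1^*(z)g_2^*(z^\vee)) = \delta_{g_1,g_2}$ for all $g_1,g_2\in\mathbb Z/p$.
   Context: An Artin–Schreier generator of $\pi$ is $y\in k(X)$ with $k(X) = k(Y)(y)$, $y^p - y = f\in k(Y)$, and $\sigma^*(y) = y+1$ for a generator $\sigma$ of $\mathbb Z/p$. It is in local standard form at $Q\in Y(k)$ if $f$ is regular at $Q$ or has a pole at $Q$ of order not divisible by $p$; it is in global standard form if it is in local standard form at every $Q\in Y(k)$ and $f\notin k$. For $P\in X(k)$ with lower ramification groups $G_{P,i}$, $d'_P := \sum_{i\ge1}(\#G_{P,i}-1)$. *)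

theory Defs
  imports "HOL-Computational_Algebra.Polynomial"
begin

text \<open>All fields live inside one ambient field type 'a, which plays the role of k(X).
  Subfields (k, k(Y)) are represented as subsets.\<close>

definition subfield :: "'a::field set \<Rightarrow> bool" where
  "subfield S \<longleftrightarrow> 0 \<in> S \<and> 1 \<in> S \<and> (\<forall>a\<in>S. \<forall>b\<in>S. a + b \<in> S \<and> a * b \<in> S)
     \<and> (\<forall>a\<in>S. - a \<in> S \<and> inverse a \<in> S)"

definition gen_field :: "'a::field set \<Rightarrow> 'a set" where
  "gen_field S = \<Inter>{F. subfield F \<and> S \<subseteq> F}"

definition alg_closed_subfield :: "'a::field set \<Rightarrow> bool" where
  "alg_closed_subfield k \<longleftrightarrow> subfield k \<and>
     (\<forall>q :: 'a poly. set (coeffs q) \<subseteq> k \<longrightarrow> degree q > 0 \<longrightarrow> (\<exists>a\<in>k. poly q a = 0))"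

text \<open>K is a function field of one variable over k (= function field of a smooth projective
  curve over k): K contains an element t transcendental over k and K is a finite
  extension of k(t).\<close>
definition function_field :: "'a::field set \<Rightarrow> 'a set \<Rightarrow> bool" where
  "function_field k K \<longleftrightarrow> subfield k \<and> subfield K \<and> k \<subseteq> K \<and>
     (\<exists>t\<in>K. (\<forall>q :: 'a poly. set (coeffs q) \<subseteq> k \<longrightarrow> q \<noteq> 0 \<longrightarrow> poly q t \<noteq> 0) \<and>
        (\<exists>B. finite B \<and> B \<subseteq> K \<and>
           (\<forall>x\<in>K. \<exists>c. (\<forall>b\<in>B. c b \<in> gen_field (insert t k)) \<and> x = (\<Sum>b\<in>B. c b * b))))"

text \<open>Normalized discrete valuation on the subfield F, trivial on k (only meaningful on
  nonzero elements). For k algebraically closed these are exactly the k-points of the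
  smooth projective curve with function field F; v is then ord at that point.\<close>
definition dval :: "'a::field set \<Rightarrow> 'a set \<Rightarrow> ('a \<Rightarrow> int) \<Rightarrow> bool" where
  "dval k F v \<longleftrightarrow>
     (\<forall>a\<in>F - {0}. \<forall>b\<in>F - {0}. v (a * b) = v a + v b) \<and>
     (\<forall>a\<in>F - {0}. \<forall>b\<in>F - {0}. a + b \<noteq> 0 \<longrightarrow> v (a + b) \<ge> min (v a) (v b)) \<and>
     (\<forall>c\<in>k - {0}. v c = 0) \<and>
     v ` (F - {0}) = UNIV"

definition field_aut :: "('a::field \<Rightarrow> 'a) \<Rightarrow> bool" where
  "field_aut g \<longleftrightarrow> bij g \<and> (\<forall>a b. g (a + b) = g a + g b \<and> g (a * b) = g a * g b)"

definition Gal :: "'a::field set \<Rightarrow> ('a \<Rightarrow> 'a) set" where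
  "Gal K = {g. field_aut g \<and> (\<forall>a\<in>K. g a = a)}"

definition trace :: "'a::field set \<Rightarrow> 'a \<Rightarrow> 'a" where
  "trace K x = (\<Sum>g\<in>Gal K. g x)"

definition ram_group :: "'a::field set \<Rightarrow> ('a \<Rightarrow> int) \<Rightarrow> nat \<Rightarrow> ('a \<Rightarrow> 'a) set" where
  "ram_group K v i = {g\<in>Gal K. (\<forall>x. x \<noteq> 0 \<longrightarrow> v (g x) = v x) \<and>
       (\<forall>x. (x = 0 \<or> v x \<ge> 0) \<longrightarrow> g x - x = 0 \<or> v (g x - x) \<ge> int i + 1)}"

definition dprime :: "'a::field set \<Rightarrow> ('a \<Rightarrow> int) \<Rightarrow> nat" where
  "dprime K v = (\<Sum>i\<in>{i. i \<ge> 1 \<and> card (ram_group K v i) > 1}. card (ram_group K v i) - 1)"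

definition AS_generator :: "nat \<Rightarrow> 'a::field set \<Rightarrow> 'a \<Rightarrow> 'a \<Rightarrow> ('a \<Rightarrow> 'a) \<Rightarrow> bool" where
  "AS_generator p K y f \<sigma> \<longleftrightarrow> gen_field (insert y K) = UNIV \<and> f \<in> K \<and> y ^ p - y = f \<and>
     \<sigma> \<in> Gal K \<and> \<sigma> y = y + 1"

definition local_standard_form :: "nat \<Rightarrow> 'a::field \<Rightarrow> ('a \<Rightarrow> int) \<Rightarrow> bool" where
  "local_standard_form p f w \<longleftrightarrow> f = 0 \<or> w f \<ge> 0 \<or> \<not> int p dvd (- w f)"

definition global_standard_form :: "nat \<Rightarrow> 'a::field set \<Rightarrow> 'a set \<Rightarrow> 'a \<Rightarrow> bool" where
  "global_standard_form p k K f \<longleftrightarrow> f \<notin> k \<and> (\<forall>w. dval k K w \<longrightarrow> local_standard_form p f w)"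

definition magical :: "'a::field set \<Rightarrow> 'a set \<Rightarrow> 'a \<Rightarrow> bool" where
  "magical k K z \<longleftrightarrow> (\<forall>v. dval k UNIV v \<longrightarrow> v z \<ge> - int (dprime K v)) \<and> trace K z \<noteq> 0"

end

theory Submission
  imports Defs "HOL-Computational_Algebra.Primes"
begin

text \<open>Every element of the Galois group is a power \<open>\<sigma> ^^ c\<close>, which maps \<open>y\<close> to \<open>y + c\<close>
  with \<open>c\<close> in the prime field. Traces of polynomial expressions in \<open>y\<close> are therefore sums
  over the shifts \<open>y + c\<close>, and in characteristic \<open>p\<close> the power sums
  \<open>\<Sum>c<p. (Y + c) ^ n\<close> vanish for \<open>n < p - 1\<close> and equal \<open>-1\<close> for \<open>n = p - 1\<close>.
  Expanding with \<open>y ^ p = y + f\<close> gives \<open>tr (y ^ (p - 1)) = -1\<close> and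
  \<open>tr (y ^ (p - 1) * ((y + \<delta>) ^ (p - 1) - 2)) = 1 - \<delta> ^ (p - 1)\<close>, which is \<open>1\<close> for
  \<open>\<delta> = 0\<close> and \<open>0\<close> otherwise.

  At a point where \<open>y\<close> has a pole of order \<open>m\<close>, global standard form forces
  \<open>j * m \<notin> v (K - {0})\<close> for \<open>0 < j < p\<close>, so the terms \<open>c\<^sub>j * y ^ j\<close> of
  \<open>x = (\<Sum>j<p. c\<^sub>j * y ^ j)\<close> have pairwise distinct valuations. Hence every automorphism
  moves \<open>x\<close> by an element of valuation at least \<open>v x + m\<close>, and at least \<open>m + 1\<close> when
  \<open>x\<close> is integral. So \<open>G\<^sub>i\<close> is the whole group for \<open>i \<le> m\<close>, and
  \<open>d' \<ge> (p - 1) * m = - v (y ^ (p - 1))\<close>. Where \<open>y\<close> has no pole the bound is trivial.\<close>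

section \<open>Subfields and field automorphisms\<close>

lemma subfieldD:
  assumes "subfield S"
  shows "0 \<in> S" "1 \<in> S" "a \<in> S \<Longrightarrow> b \<in> S \<Longrightarrow> a + b \<in> S"
    "a \<in> S \<Longrightarrow> b \<in> S \<Longrightarrow> a * b \<in> S" "a \<in> S \<Longrightarrow> - a \<in> S"
    "a \<in> S \<Longrightarrow> inverse a \<in> S"
  using assms unfolding subfield_def by auto

lemma subfield_of_nat: "subfield S \<Longrightarrow> of_nat n \<in> S"
  by (induction n) (simp_all add: subfieldD(1,2,3))

lemma gen_field_least: "subfield F \<Longrightarrow> S \<subseteq> F \<Longrightarrow> gen_field S \<subseteq> F"
  unfolding gen_field_def by auto

context
  fixes g :: "'a::field \<Rightarrow> 'a"
  assumes g: "field_aut g"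
begin

lemma field_aut_add: "g (a + b) = g a + g b"
  and field_aut_mult: "g (a * b) = g a * g b"
  using g unfolding field_aut_def by auto

lemma field_aut_inj: "inj g"
  using g unfolding field_aut_def by (simp add: bij_is_inj)

lemma field_aut_0: "g 0 = 0"
  using field_aut_add[of 0 0] by (metis add.right_neutral add_left_cancel)

lemma field_aut_1: "g 1 = 1"
proof -
  obtain u where u: "g u = 1"
    using g unfolding field_aut_def by (metis bij_pointE)
  show ?thesis using field_aut_mult[of 1 u] u by simp
qed

lemma field_aut_eq_0_iff: "g a = 0 \<longleftrightarrow> a = 0"
  using field_aut_inj field_aut_0 by (metis injD)

lemma field_aut_uminus: "g (- a) = - g a"
  using field_aut_add[of a "- a"] field_aut_0 by (simp add: eq_neg_iff_add_eq_0 add.commute)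

lemma field_aut_diff: "g (a - b) = g a - g b"
  using field_aut_add[of a "- b"] field_aut_uminus[of b] by simp

lemma field_aut_inverse: "g (inverse a) = inverse (g a)"
proof (cases "a = 0")
  case False
  then have "g a * g (inverse a) = 1"
    using field_aut_mult[of a "inverse a"] field_aut_1 by simp
  then show ?thesis by (simp add: inverse_unique)
qed (simp add: field_aut_0)

lemma field_aut_divide: "g (a / b) = g a / g b"
  by (simp add: divide_inverse field_aut_mult field_aut_inverse)

lemma field_aut_power: "g (a ^ n) = g a ^ n"
  by (induction n) (simp_all add: field_aut_1 field_aut_mult)

lemma field_aut_of_nat: "g (of_nat n) = of_nat n"
  by (induction n) (simp_all add: field_aut_0 field_aut_1 field_aut_add)

lemma field_aut_numeral: "g (numeral n) = numeral n"
  using field_aut_of_nat[of "numeral n"] by simp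

lemma field_aut_sum: "g (sum h A) = (\<Sum>i\<in>A. g (h i))"
  by (induction A rule: infinite_finite_induct) (simp_all add: field_aut_0 field_aut_add)

end

lemma field_aut_id: "field_aut id"
  unfolding field_aut_def by simp

lemma field_aut_comp: "field_aut g \<Longrightarrow> field_aut h \<Longrightarrow> field_aut (g \<circ> h)"
  unfolding field_aut_def by (auto intro: bij_comp)

lemma subfield_eq_field_auts:
  assumes "field_aut g" "field_aut h"
  shows "subfield {x. g x = h x}"
  unfolding subfield_def using assms
  by (simp add: field_aut_0 field_aut_1 field_aut_add field_aut_mult field_aut_uminus
      field_aut_inverse)

lemma field_aut_Gal: "g \<in> Gal K \<Longrightarrow> field_aut g"
  and Gal_fixes: "g \<in> Gal K \<Longrightarrow> a \<in> K \<Longrightarrow> g a = a"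
  unfolding Gal_def by auto

lemma id_in_Gal: "id \<in> Gal K"
  unfolding Gal_def by (simp add: field_aut_id)

lemma comp_in_Gal: "g \<in> Gal K \<Longrightarrow> h \<in> Gal K \<Longrightarrow> g \<circ> h \<in> Gal K"
  unfolding Gal_def by (auto intro: field_aut_comp)

lemma Gal_eqI:
  assumes "g \<in> Gal K" "h \<in> Gal K" "g y = h y" "gen_field (insert y K) = UNIV"
  shows "g = h"
proof -
  have "gen_field (insert y K) \<subseteq> {x. g x = h x}"
    using assms by (intro gen_field_least subfield_eq_field_auts field_aut_Gal) (auto simp: Gal_fixes)
  then show ?thesis using assms(4) by auto
qed

section \<open>Power sums in characteristic \<open>p\<close>\<close>

lemma inj_on_of_nat_lessThan_CHAR:
  assumes "CHAR('a::ring_1) = p"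
  shows "inj_on (of_nat :: nat \<Rightarrow> 'a) {..<p}"
proof -
  have "\<not> (of_nat c :: 'a) = of_nat d" if "c < d" "d < p" for c d
  proof
    assume "(of_nat c :: 'a) = of_nat d"
    then have "p dvd d - c" using of_nat_eq_iff_char_dvd[where 'a='a, OF that(1)] assms by simp
    then show False using that by (auto dest: dvd_imp_le)
  qed
  then show ?thesis by (intro inj_onI) (metis lessThan_iff linorder_neqE_nat)
qed

lemma of_nat_power_CHAR:
  assumes "prime p" "CHAR('a::comm_semiring_1) = p"
  shows "(of_nat n :: 'a) ^ p = of_nat n"
proof -
  have "prime CHAR('a)" "p = CHAR('a)" using assms by simp_all
  from freshmans_dream_sum[OF this, of "\<lambda>_. 1" "{..<n}"] show ?thesis by simp
qed

lemma add_power_CHAR: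
  assumes "prime p" "CHAR('a::comm_semiring_1) = p"
  shows "(a + b :: 'a) ^ p = a ^ p + b ^ p"
proof -
  have "prime CHAR('a)" "p = CHAR('a)" using assms by simp_all
  then show ?thesis by (rule freshmans_dream)
qed

lemma diff_power_CHAR:
  assumes "prime p" "CHAR('a::comm_ring_1) = p"
  shows "(a - b :: 'a) ^ p = a ^ p - b ^ p"
  using add_power_CHAR[OF assms, of "a - b" b] by simp

lemma Frobenius_fixed_points:
  assumes "prime p" "CHAR('a::field) = p"
  shows "{x :: 'a. x ^ p = x} = of_nat ` {..<p}"
proof -
  define P :: "'a poly" where "P = monom 1 p - [:0, 1:]"
  have p2: "2 \<le> p" using assms(1) prime_ge_2_nat by blast
  have roots: "{x :: 'a. x ^ p = x} = {x. poly P x = 0}" by (simp add: P_def poly_monom)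
  have "coeff P p = 1" using p2 by (simp add: P_def coeff_monom coeff_eq_0)
  then have P0: "P \<noteq> 0" by auto
  have "degree P \<le> p"
    unfolding P_def using p2 by (intro degree_diff_le) (simp_all add: degree_monom_le)
  then have card_roots: "card {x :: 'a. x ^ p = x} \<le> p"
    unfolding roots using card_poly_roots_bound[OF P0] by linarith
  have fin: "finite {x :: 'a. x ^ p = x}" unfolding roots using P0 by (rule poly_roots_finite)
  have sub: "of_nat ` {..<p} \<subseteq> {x :: 'a. x ^ p = x}" using of_nat_power_CHAR[OF assms] by auto
  have "card (of_nat ` {..<p} :: 'a set) = p"
    using card_image[OF inj_on_of_nat_lessThan_CHAR[OF assms(2)]] by simp
  then have "card (of_nat ` {..<p} :: 'a set) = card {x :: 'a. x ^ p = x}"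
    using card_roots card_mono[OF fin sub] by linarith
  then show ?thesis using card_subset_eq[OF fin sub] by simp
qed

lemma power_pred_eq_1_if_power_eq_self:
  assumes "x ^ p = x" "x \<noteq> 0" "0 < p"
  shows "(x :: 'a::field) ^ (p - 1) = 1"
proof -
  have "x * x ^ (p - 1) = x * 1" using assms(1,3) by (simp flip: power_Suc)
  then show ?thesis using assms(2) by simp
qed

lemma of_nat_power_pred_CHAR:
  assumes "prime p" "CHAR('a::field) = p" "\<not> p dvd n"
  shows "(of_nat n :: 'a) ^ (p - 1) = 1"
  using assms(2,3) prime_gt_0_nat[OF assms(1)]
  by (intro power_pred_eq_1_if_power_eq_self of_nat_power_CHAR[OF assms(1,2)])
    (simp_all add: of_nat_eq_0_iff_char_dvd)

lemma sum_of_nat_power_pred_CHAR: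
  assumes "prime p" "CHAR('a::field) = p"
  shows "(\<Sum>c<p. (of_nat c :: 'a) ^ (p - 1)) = -1"
proof -
  obtain q where q: "p = Suc q" "q \<noteq> 0"
    using prime_ge_2_nat[OF assms(1)] by (cases p) auto
  have "(\<Sum>c<p. (of_nat c :: 'a) ^ (p - 1)) = (\<Sum>i<q. (of_nat (Suc i) :: 'a) ^ (p - 1))"
    unfolding q(1) sum.lessThan_Suc_shift using q(2) by simp
  also have "\<dots> = (\<Sum>i<q. 1)"
    using q(1) by (intro sum.cong refl of_nat_power_pred_CHAR[OF assms]) (auto dest: dvd_imp_le)
  also have "\<dots> = of_nat p - 1" using q(1) by simp
  finally show ?thesis using assms(2) of_nat_CHAR[where 'a='a] by simp
qed

lemma sum_shift_power_eq_0:
  fixes Y :: "'a::field"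
  assumes "CHAR('a) = p" "Suc n < p"
  shows "(\<Sum>c<p. (Y + of_nat c) ^ n) = 0"
  using assms(2)
proof (induction n rule: less_induct)
  case (less n)
  define S where "S j = (\<Sum>c<p. (Y + of_nat c) ^ j)" for j
  have binomial: "(Y + of_nat (Suc c)) ^ Suc n - (Y + of_nat c) ^ Suc n
      = (\<Sum>j\<le>n. of_nat (Suc n choose j) * (Y + of_nat c) ^ j)" for c
  proof -
    have "(Y + of_nat (Suc c)) ^ Suc n = ((Y + of_nat c) + 1) ^ Suc n" by (simp add: algebra_simps)
    also have "\<dots> = (\<Sum>j\<le>n. of_nat (Suc n choose j) * (Y + of_nat c) ^ j) + (Y + of_nat c) ^ Suc n"
      by (subst binomial_ring) (simp add: sum.atMost_Suc)
    finally show ?thesis by simp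
  qed
  have "0 = (\<Sum>c<p. (Y + of_nat (Suc c)) ^ Suc n - (Y + of_nat c) ^ Suc n)"
    using sum_lessThan_telescope[of "\<lambda>c. (Y + of_nat c) ^ Suc n" p] assms(1) of_nat_CHAR[where 'a='a]
    by simp
  also have "\<dots> = (\<Sum>j\<le>n. of_nat (Suc n choose j) * S j)"
    unfolding binomial S_def by (simp add: sum_distrib_left sum.swap[of _ "{..<p}"])
  also have "\<dots> = of_nat (Suc n) * S n"
    using less.IH less.prems
    by (subst sum.mono_neutral_right[of "{..n}" "{n}"]) (auto simp: S_def)
  finally have "of_nat (Suc n) * S n = 0" by simp
  moreover have "(of_nat (Suc n) :: 'a) \<noteq> 0"
    unfolding of_nat_eq_0_iff_char_dvd assms(1) using less.prems by (auto dest: dvd_imp_le)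
  ultimately show ?case by (simp add: S_def)
qed

lemma sum_shift_power_pred_CHAR:
  fixes Y :: "'a::field"
  assumes "prime p" "CHAR('a) = p"
  shows "(\<Sum>c<p. (Y + of_nat c) ^ (p - 1)) = -1"
proof -
  have "(\<Sum>c<p. (Y + of_nat c) ^ (p - 1))
      = (\<Sum>c<p. \<Sum>j\<le>p - 1. of_nat (p - 1 choose j) * of_nat c ^ j * Y ^ (p - 1 - j))"
    by (rule sum.cong[OF refl], subst add.commute, rule binomial_ring)
  also have "\<dots> = (\<Sum>j\<le>p - 1. of_nat (p - 1 choose j) * Y ^ (p - 1 - j) * (\<Sum>c<p. (0 + of_nat c) ^ j))"
    by (simp add: sum_distrib_left sum.swap[of _ "{..<p}"] mult_ac)
  also have "\<dots> = (\<Sum>c<p. (of_nat c :: 'a) ^ (p - 1))"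
    using sum_shift_power_eq_0[OF assms(2), of _ 0] prime_gt_0_nat[OF assms(1)]
    by (subst sum.mono_neutral_right[of "{..p - 1}" "{p - 1}"]) auto
  also have "\<dots> = -1" by (rule sum_of_nat_power_pred_CHAR[OF assms])
  finally show ?thesis .
qed

lemma sum_shift_power_pred_add:
  fixes Y :: "'a::field"
  assumes "prime p" "CHAR('a) = p" "k \<le> p - 1"
  shows "(\<Sum>c<p. (Y + of_nat c) ^ (p - 1 + k)) = (if k = 0 \<or> k = p - 1 then -1 else 0)"
proof (cases "k = 0")
  case True
  then show ?thesis using sum_shift_power_pred_CHAR[OF assms(1,2)] by simp
next
  case False
  define F where "F = Y ^ p - Y"
  have p2: "2 \<le> p" using prime_ge_2_nat[OF assms(1)] .
  have split: "(Y + of_nat c) ^ (p - 1 + k) = (Y + of_nat c) ^ k + F * (Y + of_nat c) ^ (k - 1)" for c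
  proof -
    have "(Y + of_nat c) ^ p = (Y + of_nat c) + F"
      unfolding F_def add_power_CHAR[OF assms(1,2)] of_nat_power_CHAR[OF assms(1,2)] by simp
    moreover have "p - 1 + k = p + (k - 1)" "k = Suc (k - 1)" using False p2 by auto
    ultimately show ?thesis by (metis power_add power_Suc distrib_right)
  qed
  have "(\<Sum>c<p. (Y + of_nat c) ^ (p - 1 + k))
      = (\<Sum>c<p. (Y + of_nat c) ^ k) + F * (\<Sum>c<p. (Y + of_nat c) ^ (k - 1))"
    unfolding split by (simp add: sum.distrib sum_distrib_left)
  also have "(\<Sum>c<p. (Y + of_nat c) ^ (k - 1)) = 0"
    using False assms(3) p2 by (intro sum_shift_power_eq_0[OF assms(2)]) simp
  also have "(\<Sum>c<p. (Y + of_nat c) ^ k) = (if k = p - 1 then -1 else 0)"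
    using sum_shift_power_pred_CHAR[OF assms(1,2)] sum_shift_power_eq_0[OF assms(2), of k] assms(3)
    by auto
  finally show ?thesis using False by simp
qed

lemma sum_shift_power_pred_mult:
  fixes Y \<delta> :: "'a::field"
  assumes "prime p" "CHAR('a) = p"
  shows "(\<Sum>c<p. (Y + of_nat c) ^ (p - 1) * (Y + of_nat c + \<delta>) ^ (p - 1)) = - (\<delta> ^ (p - 1)) - 1"
proof -
  define u where "u c = Y + of_nat c" for c
  have "u c ^ (p - 1) * (u c + \<delta>) ^ (p - 1)
      = (\<Sum>k\<le>p - 1. of_nat (p - 1 choose k) * \<delta> ^ (p - 1 - k) * u c ^ (p - 1 + k))" for c
    unfolding binomial_ring sum_distrib_left power_add by (simp add: mult_ac)
  then have "(\<Sum>c<p. u c ^ (p - 1) * (u c + \<delta>) ^ (p - 1))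
      = (\<Sum>k\<le>p - 1. of_nat (p - 1 choose k) * \<delta> ^ (p - 1 - k) * (\<Sum>c<p. u c ^ (p - 1 + k)))"
    by (simp add: sum_distrib_left sum.swap[of _ "{..<p}"])
  also have "\<dots> = (\<Sum>k\<le>p - 1. if k = 0 \<or> k = p - 1
      then - (of_nat (p - 1 choose k) * \<delta> ^ (p - 1 - k)) else 0)"
  proof (rule sum.cong[OF refl])
    fix k assume "k \<in> {..p - 1}"
    then have "(\<Sum>c<p. u c ^ (p - 1 + k)) = (if k = 0 \<or> k = p - 1 then -1 else 0)"
      unfolding u_def by (intro sum_shift_power_pred_add[OF assms]) simp
    then show "of_nat (p - 1 choose k) * \<delta> ^ (p - 1 - k) * (\<Sum>c<p. u c ^ (p - 1 + k))
        = (if k = 0 \<or> k = p - 1 then - (of_nat (p - 1 choose k) * \<delta> ^ (p - 1 - k)) else 0)"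
      by simp
  qed
  also have "\<dots> = (\<Sum>k\<in>{0, p - 1}. - (of_nat (p - 1 choose k) * \<delta> ^ (p - 1 - k)))"
    by (rule sum.mono_neutral_cong_right) auto
  also have "\<dots> = - (\<delta> ^ (p - 1)) - 1" using prime_ge_2_nat[OF assms(1)] by simp
  finally show ?thesis unfolding u_def .
qed

lemma sum_shift_trace_pairing:
  fixes Y \<delta> :: "'a::field"
  assumes "prime p" "CHAR('a) = p"
  shows "(\<Sum>c<p. (Y + of_nat c) ^ (p - 1) * ((Y + of_nat c + \<delta>) ^ (p - 1) - 2)) = 1 - \<delta> ^ (p - 1)"
  using sum_shift_power_pred_mult[OF assms, of Y \<delta>] sum_shift_power_pred_CHAR[OF assms, of Y]
  by (simp add: right_diff_distrib sum_subtractf flip: sum_distrib_right)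

section \<open>Artin--Schreier extensions\<close>

locale AS_extension =
  fixes K :: "'a::field set" and p :: nat and y f :: 'a and \<sigma> :: "'a \<Rightarrow> 'a"
  assumes prime_p: "prime p" and CHAR_p: "CHAR('a) = p" and subfield_K: "subfield K"
    and AS_generator: "AS_generator p K y f \<sigma>"
begin

lemma generates: "gen_field (insert y K) = UNIV"
  and f_in_K: "f \<in> K"
  and AS_equation: "y ^ p - y = f"
  and \<sigma>_in_Gal: "\<sigma> \<in> Gal K"
  and \<sigma>_y: "\<sigma> y = y + 1"
  using AS_generator unfolding AS_generator_def by auto

lemma two_le_p: "2 \<le> p"
  using prime_ge_2_nat[OF prime_p] .

lemma of_nat_in_K: "of_nat c \<in> K"
  using subfield_K by (rule subfield_of_nat)

lemma y_notin_K: "y \<notin> K"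
  using \<sigma>_y Gal_fixes[OF \<sigma>_in_Gal] by force

lemma y_nonzero: "y \<noteq> 0"
  using y_notin_K subfieldD(1)[OF subfield_K] by auto

lemma f_nonzero: "f \<noteq> 0"
proof
  assume "f = 0"
  then have "y \<in> of_nat ` {..<p}"
    using AS_equation Frobenius_fixed_points[OF prime_p CHAR_p] by auto
  then show False using y_notin_K of_nat_in_K by auto
qed

lemma Gal_shift_y:
  assumes "g \<in> Gal K"
  obtains c where "c < p" "g y = y + of_nat c"
proof -
  have g: "field_aut g" using assms by (rule field_aut_Gal)
  have "g y ^ p - g y = g (y ^ p - y)" by (simp add: field_aut_diff[OF g] field_aut_power[OF g])
  also have "\<dots> = f" using AS_equation Gal_fixes[OF assms f_in_K] by simp
  finally have "(g y - y) ^ p = g y - y"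
    using AS_equation by (simp add: diff_power_CHAR[OF prime_p CHAR_p] algebra_simps)
  then have "g y - y \<in> of_nat ` {..<p}" using Frobenius_fixed_points[OF prime_p CHAR_p] by blast
  then show ?thesis using that by (auto simp: algebra_simps)
qed

lemma funpow_\<sigma>_in_Gal: "\<sigma> ^^ c \<in> Gal K"
  by (induction c) (simp_all only: funpow.simps id_in_Gal comp_in_Gal[OF \<sigma>_in_Gal])

lemma funpow_\<sigma>_y: "(\<sigma> ^^ c) y = y + of_nat c"
proof (induction c)
  case (Suc c)
  then show ?case
    using field_aut_add[OF field_aut_Gal[OF \<sigma>_in_Gal]] Gal_fixes[OF \<sigma>_in_Gal of_nat_in_K] \<sigma>_y
    by (simp add: algebra_simps)
qed simp

lemma Gal_eq_funpow_\<sigma>: "Gal K = (\<lambda>c. \<sigma> ^^ c) ` {..<p}"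
proof
  show "Gal K \<subseteq> (\<lambda>c. \<sigma> ^^ c) ` {..<p}"
  proof
    fix g assume g: "g \<in> Gal K"
    then obtain c where "c < p" "g y = (\<sigma> ^^ c) y" using Gal_shift_y funpow_\<sigma>_y by metis
    then show "g \<in> (\<lambda>c. \<sigma> ^^ c) ` {..<p}"
      using Gal_eqI[OF g funpow_\<sigma>_in_Gal _ generates] by auto
  qed
qed (auto simp: funpow_\<sigma>_in_Gal)

lemma inj_on_funpow_\<sigma>: "inj_on (\<lambda>c. \<sigma> ^^ c) {..<p}"
proof (rule inj_onI)
  fix c d assume "c \<in> {..<p}" "d \<in> {..<p}" "\<sigma> ^^ c = \<sigma> ^^ d"
  then show "c = d"
    using funpow_\<sigma>_y[of c] funpow_\<sigma>_y[of d] inj_on_of_nat_lessThan_CHAR[OF CHAR_p]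
    by (auto dest: inj_onD)
qed

lemma card_Gal: "card (Gal K) = p"
  unfolding Gal_eq_funpow_\<sigma> using card_image[OF inj_on_funpow_\<sigma>] by simp

lemma trace_eq_sum_funpow_\<sigma>: "trace K x = (\<Sum>c<p. (\<sigma> ^^ c) x)"
  unfolding trace_def Gal_eq_funpow_\<sigma> by (simp add: sum.reindex[OF inj_on_funpow_\<sigma>])

lemma funpow_\<sigma>_y_power: "(\<sigma> ^^ c) (y ^ j) = (y + of_nat c) ^ j"
  using field_aut_power[OF field_aut_Gal[OF funpow_\<sigma>_in_Gal]] funpow_\<sigma>_y by simp

lemma trace_y_power_pred: "trace K (y ^ (p - 1)) = -1"
  unfolding trace_eq_sum_funpow_\<sigma> funpow_\<sigma>_y_power
  by (rule sum_shift_power_pred_CHAR[OF prime_p CHAR_p])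

lemma trace_pairing_y_power_pred:
  assumes "g1 \<in> Gal K" "g2 \<in> Gal K"
  shows "trace K (g1 (y ^ (p - 1)) * g2 (y ^ (p - 1) - 2)) = (if g1 = g2 then 1 else 0)"
proof -
  obtain a b where ab: "a < p" "b < p" "g1 = \<sigma> ^^ a" "g2 = \<sigma> ^^ b"
    using assms unfolding Gal_eq_funpow_\<sigma> by blast
  define Y where "Y = y + of_nat a"
  define \<delta> :: 'a where "\<delta> = of_nat b - of_nat a"
  have aut: "field_aut (\<sigma> ^^ n)" for n using funpow_\<sigma>_in_Gal by (rule field_aut_Gal)
  have funpow_comp: "(\<sigma> ^^ c) ((\<sigma> ^^ n) x) = (\<sigma> ^^ (c + n)) x" for c n x
    by (simp add: funpow_add)
  have "(\<sigma> ^^ c) (g1 (y ^ (p - 1)) * g2 (y ^ (p - 1) - 2))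
      = (Y + of_nat c) ^ (p - 1) * ((Y + of_nat c + \<delta>) ^ (p - 1) - 2)" for c
    unfolding ab(3,4) field_aut_mult[OF aut] funpow_comp
    by (simp add: field_aut_diff[OF aut] field_aut_numeral[OF aut] funpow_\<sigma>_y_power
        Y_def \<delta>_def algebra_simps)
  then have "trace K (g1 (y ^ (p - 1)) * g2 (y ^ (p - 1) - 2)) = 1 - \<delta> ^ (p - 1)"
    unfolding trace_eq_sum_funpow_\<sigma> using sum_shift_trace_pairing[OF prime_p CHAR_p] by simp
  also have "\<dots> = (if g1 = g2 then 1 else 0)"
  proof (cases "a = b")
    case True
    then show ?thesis using ab two_le_p by (simp add: \<delta>_def)
  next
    case False
    then have "g1 \<noteq> g2" using ab inj_on_funpow_\<sigma> by (auto dest: inj_onD)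
    moreover have "\<delta> \<noteq> 0"
      using False ab(1,2) inj_on_of_nat_lessThan_CHAR[OF CHAR_p] by (auto simp: \<delta>_def dest: inj_onD)
    moreover have "\<delta> ^ p = \<delta>"
      unfolding \<delta>_def diff_power_CHAR[OF prime_p CHAR_p] of_nat_power_CHAR[OF prime_p CHAR_p] ..
    ultimately show ?thesis
      using power_pred_eq_1_if_power_eq_self[of \<delta> p] two_le_p by simp
  qed
  finally show ?thesis .
qed

definition y_span :: "'a set" where
  "y_span = {(\<Sum>j<p. c j * y ^ j) | c. \<forall>j. c j \<in> K}"

lemma y_spanI: "(\<And>j. c j \<in> K) \<Longrightarrow> (\<Sum>j<p. c j * y ^ j) \<in> y_span"
  unfolding y_span_def by blast

lemma y_span_monomial: "a \<in> K \<Longrightarrow> j < p \<Longrightarrow> a * y ^ j \<in> y_span"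
  using y_spanI[of "\<lambda>i. if i = j then a else 0"] subfieldD(1)[OF subfield_K]
  by (simp add: if_distrib[of "\<lambda>x. x * _"] cong: if_cong)

lemma y_span_K: "a \<in> K \<Longrightarrow> a \<in> y_span"
  using y_span_monomial[of a 0] two_le_p by simp

lemma y_span_y: "y \<in> y_span"
  using y_span_monomial[of 1 1] two_le_p subfieldD(2)[OF subfield_K] by simp

lemma y_span_0: "0 \<in> y_span" and y_span_1: "1 \<in> y_span"
  using y_span_K subfieldD(1,2)[OF subfield_K] by blast+

lemma y_span_add:
  assumes "x \<in> y_span" "x' \<in> y_span"
  shows "x + x' \<in> y_span"
proof -
  obtain c d where "\<And>j. c j \<in> K" "x = (\<Sum>j<p. c j * y ^ j)" "\<And>j. d j \<in> K" "x' = (\<Sum>j<p. d j * y ^ j)"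
    using assms unfolding y_span_def by blast
  then show ?thesis
    using y_spanI[of "\<lambda>j. c j + d j"] subfieldD(3)[OF subfield_K]
    by (simp add: distrib_right sum.distrib)
qed

lemma y_span_scale:
  assumes "a \<in> K" "x \<in> y_span"
  shows "a * x \<in> y_span"
proof -
  obtain c where "\<And>j. c j \<in> K" "x = (\<Sum>j<p. c j * y ^ j)"
    using assms(2) unfolding y_span_def by blast
  then show ?thesis
    using y_spanI[of "\<lambda>j. a * c j"] subfieldD(4)[OF subfield_K] assms(1)
    by (simp add: sum_distrib_left mult.assoc)
qed

lemma y_span_uminus: "x \<in> y_span \<Longrightarrow> - x \<in> y_span"
  using y_span_scale[of "-1" x] subfieldD(2,5)[OF subfield_K] by simp

lemma y_span_sum: "(\<And>i. i \<in> A \<Longrightarrow> t i \<in> y_span) \<Longrightarrow> sum t A \<in> y_span"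
  by (induction A rule: infinite_finite_induct) (simp_all add: y_span_0 y_span_add)

lemma y_span_mult_y:
  assumes "x \<in> y_span"
  shows "y * x \<in> y_span"
proof -
  obtain c where c: "\<And>j. c j \<in> K" "x = (\<Sum>j<p. c j * y ^ j)"
    using assms unfolding y_span_def by blast
  obtain q where q: "p = Suc q" using two_le_p by (cases p) auto
  have "y * x = (\<Sum>j<q. c j * y ^ Suc j) + c q * y ^ p"
    unfolding c(2) q sum.lessThan_Suc by (simp add: distrib_left sum_distrib_left mult_ac)
  also have "c q * y ^ p = c q * f + c q * y ^ 1"
    using AS_equation by (simp add: algebra_simps)
  finally have "y * x = (\<Sum>j<q. c j * y ^ Suc j) + (c q * f + c q * y ^ 1)" .
  moreover have "(\<Sum>j<q. c j * y ^ Suc j) \<in> y_span"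
    using c(1) q by (intro y_span_sum y_span_monomial) auto
  moreover have "c q * f \<in> y_span"
    using subfieldD(4)[OF subfield_K c(1) f_in_K] by (rule y_span_K)
  moreover have "c q * y ^ 1 \<in> y_span"
    using c(1) two_le_p by (intro y_span_monomial) auto
  ultimately show ?thesis by (simp add: y_span_add)
qed

lemma y_span_mult_y_power: "x \<in> y_span \<Longrightarrow> y ^ n * x \<in> y_span"
  by (induction n) (simp_all add: mult.assoc y_span_mult_y)

lemma y_span_mult:
  assumes "x \<in> y_span" "x' \<in> y_span"
  shows "x * x' \<in> y_span"
proof -
  obtain c where c: "\<And>j. c j \<in> K" "x' = (\<Sum>j<p. c j * y ^ j)"
    using assms(2) unfolding y_span_def by blast
  have "x * x' = (\<Sum>j<p. c j * (y ^ j * x))"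
    unfolding c(2) by (simp add: sum_distrib_left mult_ac)
  then show ?thesis
    using c(1) assms(1) by (auto intro!: y_span_sum y_span_scale y_span_mult_y_power)
qed

lemma y_span_y_power: "y ^ n \<in> y_span"
  using y_span_mult_y_power[OF y_span_1, of n] by simp

lemma y_span_fraction:
  obtains a b where "a \<in> y_span" "b \<in> y_span" "b \<noteq> 0" "x = a / b"
proof -
  define Q where "Q = {a / b | a b. a \<in> y_span \<and> b \<in> y_span \<and> b \<noteq> 0}"
  have y_span_Q: "a \<in> Q" if "a \<in> y_span" for a
    unfolding Q_def using that y_span_1 by force
  have "subfield Q"
    unfolding subfield_def
  proof (intro conjI ballI)
    show "0 \<in> Q" "1 \<in> Q" using y_span_Q y_span_0 y_span_1 by auto
  next
    fix x x' assume "x \<in> Q" "x' \<in> Q"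
    then obtain a b a' b' where ab: "a \<in> y_span" "b \<in> y_span" "b \<noteq> 0" "x = a / b"
      and ab': "a' \<in> y_span" "b' \<in> y_span" "b' \<noteq> 0" "x' = a' / b'"
      unfolding Q_def by blast
    have "x + x' = (a * b' + a' * b) / (b * b')" "x * x' = (a * a') / (b * b')"
      using ab ab' by (simp_all add: field_simps)
    moreover have "a * b' + a' * b \<in> y_span" "a * a' \<in> y_span" "b * b' \<in> y_span" "b * b' \<noteq> 0"
      using ab ab' by (simp_all add: y_span_add y_span_mult)
    ultimately show "x + x' \<in> Q" "x * x' \<in> Q"
      unfolding Q_def by blast+
  next
    fix x assume "x \<in> Q"
    then obtain a b where ab: "a \<in> y_span" "b \<in> y_span" "b \<noteq> 0" "x = a / b"
      unfolding Q_def by blast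
    show "- x \<in> Q" unfolding Q_def using ab y_span_uminus by force
    show "inverse x \<in> Q"
      using ab y_span_Q[OF y_span_0] unfolding Q_def by (cases "a = 0") force+
  qed
  moreover have "insert y K \<subseteq> Q" using y_span_Q y_span_y y_span_K by blast
  ultimately have "x \<in> Q" using gen_field_least generates by blast
  then show ?thesis using that unfolding Q_def by blast
qed

lemma Gal_apply_y_expansion:
  assumes "g \<in> Gal K" "\<And>j. c j \<in> K"
  shows "g (\<Sum>j<p. c j * y ^ j) = (\<Sum>j<p. c j * g y ^ j)"
  using field_aut_Gal[OF assms(1)]
  by (simp add: field_aut_sum field_aut_mult field_aut_power Gal_fixes[OF assms])

end

section \<open>Discrete valuations\<close>

locale discrete_valuation =
  fixes k :: "'a::field set" and v :: "'a \<Rightarrow> int"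
  assumes subfield_k: "subfield k" and dval: "dval k UNIV v"
begin

lemma val_mult: "a \<noteq> 0 \<Longrightarrow> b \<noteq> 0 \<Longrightarrow> v (a * b) = v a + v b"
  and val_add: "a \<noteq> 0 \<Longrightarrow> b \<noteq> 0 \<Longrightarrow> a + b \<noteq> 0 \<Longrightarrow> min (v a) (v b) \<le> v (a + b)"
  and val_const: "c \<in> k \<Longrightarrow> c \<noteq> 0 \<Longrightarrow> v c = 0"
  using dval unfolding dval_def by blast+

lemma val_1: "v 1 = 0"
  using val_mult[of 1 1] by simp

lemma val_of_nat: "of_nat n \<noteq> (0::'a) \<Longrightarrow> v (of_nat n) = 0"
  using val_const subfield_of_nat[OF subfield_k] by blast

lemma val_uminus: "v (- a) = v a"
proof (cases "a = 0")
  case False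
  have "v (-1) + v (-1) = 0" using val_mult[of "-1" "-1"] val_1 by simp
  then show ?thesis using val_mult[of "-1" a] False by simp
qed simp

lemma val_inverse: "a \<noteq> 0 \<Longrightarrow> v (inverse a) = - v a"
  using val_mult[of a "inverse a"] val_1 by simp

lemma val_divide: "a \<noteq> 0 \<Longrightarrow> b \<noteq> 0 \<Longrightarrow> v (a / b) = v a - v b"
  using val_mult[of a "inverse b"] val_inverse[of b] by (simp add: divide_inverse)

lemma val_power: "a \<noteq> 0 \<Longrightarrow> v (a ^ n) = int n * v a"
  by (induction n) (simp_all add: val_1 val_mult algebra_simps)

lemma val_add_eq_left:
  assumes "a \<noteq> 0" "b \<noteq> 0" "v a < v b"
  shows "a + b \<noteq> 0" "v (a + b) = v a"
proof -
  show ab: "a + b \<noteq> 0"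
    using assms val_uminus[of a] by (auto simp: add_eq_0_iff2)
  have "min (v (a + b)) (v (- b)) \<le> v a"
    using val_add[of "a + b" "- b"] ab assms by simp
  then show "v (a + b) = v a"
    using val_add[OF assms(1,2) ab] assms(3) val_uminus[of b] by linarith
qed

text \<open>\<open>v 0\<close> is junk: \<open>val_ge B x\<close> reads \<open>v x \<ge> B\<close> with the convention \<open>v 0 = \<infinity>\<close>.\<close>

definition val_ge :: "int \<Rightarrow> 'a \<Rightarrow> bool" where
  "val_ge B x \<longleftrightarrow> x = 0 \<or> B \<le> v x"

lemma val_ge_0: "val_ge B 0"
  and val_ge_self: "val_ge (v x) x"
  and val_ge_mono: "B' \<le> B \<Longrightarrow> val_ge B x \<Longrightarrow> val_ge B' x"
  and val_ge_uminus: "val_ge B x \<Longrightarrow> val_ge B (- x)"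
  unfolding val_ge_def by (auto simp: val_uminus)

lemma val_ge_of_nat: "val_ge 0 (of_nat n)"
  unfolding val_ge_def by (cases "of_nat n = (0::'a)") (simp_all add: val_of_nat)

lemma val_ge_add:
  assumes "val_ge B a" "val_ge B b"
  shows "val_ge B (a + b)"
  using assms val_add[of a b] unfolding val_ge_def by fastforce

lemma val_ge_diff: "val_ge B a \<Longrightarrow> val_ge B b \<Longrightarrow> val_ge B (a - b)"
  using val_ge_add[of B a "- b"] val_ge_uminus[of B b] by simp

lemma val_ge_mult:
  assumes "val_ge B a" "val_ge B' b"
  shows "val_ge (B + B') (a * b)"
  using assms unfolding val_ge_def by (cases "a = 0 \<or> b = 0") (auto simp: val_mult)

lemma val_ge_sum: "(\<And>i. i \<in> A \<Longrightarrow> val_ge B (t i)) \<Longrightarrow> val_ge B (sum t A)"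
  by (induction A rule: infinite_finite_induct) (simp_all add: val_ge_0 val_ge_add)

lemma val_ge_divide:
  assumes "val_ge B a" "b \<noteq> 0"
  shows "val_ge (B - v b) (a / b)"
  using assms unfolding val_ge_def by (cases "a = 0") (auto simp: val_divide)

lemma val_ge_power: "val_ge B a \<Longrightarrow> val_ge (int n * B) (a ^ n)"
proof (induction n)
  case 0
  then show ?case using val_ge_self[of 1] val_1 by simp
next
  case (Suc n)
  then show ?case using val_ge_mult[of B a "int n * B" "a ^ n"] by (simp add: algebra_simps)
qed

lemma val_add_eq_left_if_val_ge:
  assumes "a \<noteq> 0" "val_ge (v a + 1) b"
  shows "a + b \<noteq> 0" "v (a + b) = v a"
  using assms val_add_eq_left[of a b] unfolding val_ge_def by (cases "b = 0"; simp)+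

lemma val_sum_distinct:
  assumes "finite J" "J \<noteq> {}" "\<And>j. j \<in> J \<Longrightarrow> t j \<noteq> 0" "inj_on (\<lambda>j. v (t j)) J"
  shows "sum t J \<noteq> 0 \<and> v (sum t J) = Min ((\<lambda>j. v (t j)) ` J)"
  using assms
proof (induction J rule: finite_ne_induct)
  case (insert x F)
  have IH: "sum t F \<noteq> 0" "v (sum t F) = Min ((\<lambda>j. v (t j)) ` F)"
    using insert.IH insert.prems by (auto intro: inj_on_subset)
  have "Min ((\<lambda>j. v (t j)) ` F) \<in> (\<lambda>j. v (t j)) ` F"
    using insert.hyps by (intro Min_in) auto
  then obtain j where j: "j \<in> F" "v (sum t F) = v (t j)"
    using IH(2) by auto
  then have "v (t x) \<noteq> v (sum t F)"
    using insert.prems(2) insert.hyps(3) by (auto dest: inj_onD)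
  moreover have "t x \<noteq> 0" using insert.prems by simp
  ultimately have "t x + sum t F \<noteq> 0 \<and> v (t x + sum t F) = min (v (t x)) (v (sum t F))"
    using val_add_eq_left[of "t x" "sum t F"] val_add_eq_left[of "sum t F" "t x"] IH(1)
    by (cases "v (t x) < v (sum t F)") (auto simp: add.commute)
  then show ?case using insert.hyps IH(2) by (simp add: Min_insert)
qed simp

end

section \<open>Ramification at a pole of the generator\<close>

locale AS_pole = AS_extension K p y f \<sigma> + discrete_valuation k v
  for k K :: "'a::field set" and p y f \<sigma> and v :: "'a \<Rightarrow> int" +
  fixes m :: int
  assumes val_y: "v y = - m" and m_pos: "0 < m"
    and standard_form: "\<forall>w. dval k K w \<longrightarrow> local_standard_form p f w"
begin

lemma val_y_power: "v (y ^ j) = - int j * m"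
  using val_power[OF y_nonzero, of j] val_y by simp

lemma val_f: "v f = - int p * m"
proof -
  have "v (y ^ p) < v (- y)"
    using val_y_power[of p] val_uminus[of y] val_y m_pos two_le_p
    by (simp add: mult_strict_right_mono)
  then have "v (y ^ p + - y) = v (y ^ p)"
    using y_nonzero by (intro val_add_eq_left) auto
  then show ?thesis using AS_equation val_y_power by simp
qed

definition val_group :: "int set" where
  "val_group = v ` (K - {0})"

lemma val_in_val_group: "a \<in> K \<Longrightarrow> a \<noteq> 0 \<Longrightarrow> v a \<in> val_group"
  unfolding val_group_def by blast

lemma val_group_diff:
  assumes "s \<in> val_group" "t \<in> val_group"
  shows "s - t \<in> val_group"
proof -
  obtain a b where "a \<in> K" "a \<noteq> 0" "s = v a" "b \<in> K" "b \<noteq> 0" "t = v b"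
    using assms unfolding val_group_def by auto
  then show ?thesis
    using val_in_val_group[of "a / b"] val_divide[of a b]
      subfieldD(4,6)[OF subfield_K] by (simp add: divide_inverse)
qed

lemma val_group_mult: "s \<in> val_group \<Longrightarrow> t * s \<in> val_group"
proof -
  assume s: "s \<in> val_group"
  then have zero: "0 \<in> val_group" using val_group_diff[OF s s] by simp
  have nat: "int n * s \<in> val_group" for n
  proof (induction n)
    case (Suc n)
    then show ?case using val_group_diff[OF Suc val_group_diff[OF zero s]] by (simp add: algebra_simps)
  qed (simp add: zero)
  show "t * s \<in> val_group"
  proof (cases "0 \<le> t")
    case False
    then show ?thesis using val_group_diff[OF zero nat[of "nat (- t)"]] by simp
  qed (use nat[of "nat t"] in simp)
qed

lemma val_group_eq_multiples: "\<exists>d>0. val_group = range (\<lambda>t. d * t)"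
proof -
  define P where "P = {n::nat. 0 < n \<and> int n \<in> val_group}"
  define d where "d = (LEAST n. n \<in> P)"
  have "nat (int p * m) \<in> P"
    unfolding P_def using val_in_val_group[OF f_in_K f_nonzero] val_group_mult[of "v f" "-1"]
      val_f m_pos two_le_p by simp
  then have "d \<in> P" unfolding d_def by (rule LeastI)
  then have d: "0 < d" "int d \<in> val_group" unfolding P_def by auto
  have "s \<in> range (\<lambda>t. int d * t)" if s: "s \<in> val_group" for s
  proof -
    have "s mod int d = s - (s div int d) * int d" by (simp add: minus_div_mult_eq_mod)
    then have in_group: "s mod int d \<in> val_group"
      using val_group_diff[OF s val_group_mult[OF d(2)]] by simp
    have bounds: "0 \<le> s mod int d" "s mod int d < int d" using d by simp_all
    have "s mod int d = 0"
    proof (rule ccontr)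
      assume "s mod int d \<noteq> 0"
      then have "nat (s mod int d) \<in> P" unfolding P_def using in_group bounds by simp
      then have "d \<le> nat (s mod int d)" unfolding d_def by (rule Least_le)
      then show False using bounds by linarith
    qed
    then show ?thesis by (metis dvd_def dvd_eq_mod_eq_0 rangeI)
  qed
  moreover have "int d * t \<in> val_group" for t using val_group_mult[OF d(2), of t] by (simp add: mult.commute)
  ultimately show ?thesis using d(1) by (intro exI[of _ "int d"]) auto
qed

lemma dval_val_div:
  assumes d: "0 < d" "val_group = range (\<lambda>t. d * t)"
  shows "dval k K (\<lambda>x. v x div d)"
proof -
  have v_eq: "v a = d * (v a div d)" if "a \<in> K - {0}" for a
    using val_in_val_group[of a] that d by auto
  have closed: "a * b \<in> K - {0}" "a + b \<noteq> 0 \<Longrightarrow> a + b \<in> K - {0}"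
    if "a \<in> K - {0}" "b \<in> K - {0}" for a b
    using that subfieldD(3,4)[OF subfield_K] by auto
  show ?thesis
    unfolding dval_def
  proof (intro conjI ballI impI)
    fix a b assume a: "a \<in> K - {0}" and b: "b \<in> K - {0}"
    have "d * (v (a * b) div d) = d * (v a div d + v b div d)"
      using val_mult[of a b] a b v_eq[OF closed(1)[OF a b]] v_eq[OF a] v_eq[OF b]
      by (simp add: distrib_left)
    then show "v (a * b) div d = v a div d + v b div d" using d(1) by simp
    assume ab: "a + b \<noteq> 0"
    have "min (d * (v a div d)) (d * (v b div d)) \<le> d * (v (a + b) div d)"
      using val_add[of a b] a b ab v_eq[OF closed(2)[OF a b ab]] v_eq[OF a] v_eq[OF b] by simp
    then show "min (v a div d) (v b div d) \<le> v (a + b) div d"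
      using d(1) by (simp add: min_def split: if_splits)
  next
    fix c assume "c \<in> k - {0}"
    then show "v c div d = 0" using val_const by simp
  next
    show "(\<lambda>x. v x div d) ` (K - {0}) = UNIV"
    proof (intro set_eqI iffI)
      fix n :: int
      have "d * n \<in> val_group" unfolding d(2) by (rule rangeI)
      then obtain a where "a \<in> K - {0}" "v a = d * n" unfolding val_group_def by (metis imageE)
      then show "n \<in> (\<lambda>x. v x div d) ` (K - {0})" using d(1) by (intro image_eqI[of _ _ a]) auto
    qed auto
  qed
qed

text \<open>The only use of global standard form. In effect it says that the value group of \<open>K\<close>
  is \<open>p\<close> times that of \<open>v\<close> and that \<open>p\<close> does not divide \<open>m\<close>: the pole of \<open>y\<close> is ramified.\<close>

lemma pole_multiple_notin_val_group:
  assumes j: "0 < j" "j < p"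
  shows "int j * m \<notin> val_group"
proof
  assume "int j * m \<in> val_group"
  obtain d where d: "0 < d" "val_group = range (\<lambda>t. d * t)"
    using val_group_eq_multiples by blast
  then obtain e where e: "int j * m = d * e"
    using \<open>int j * m \<in> val_group\<close> by auto
  define n where "n = - (v f div d)"
  have dn: "d * n = int p * m"
    using val_in_val_group[OF f_in_K f_nonzero] d val_f unfolding n_def by auto
  moreover have "0 < int p * m" using m_pos two_le_p by simp
  ultimately have "0 < n" using d(1) by (metis zero_less_mult_pos)
  then have "\<not> int p dvd n"
    using standard_form dval_val_div[OF d] f_nonzero unfolding local_standard_form_def n_def by auto
  have "(int j * n) * m = (int j * m) * n" by (simp only: mult_ac)
  also have "\<dots> = e * (d * n)" unfolding e by (simp only: mult_ac)
  also have "\<dots> = (e * int p) * m" unfolding dn by (simp only: mult_ac)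
  finally have "int p dvd int j * n" using m_pos by simp
  moreover have "\<not> int p dvd int j" using j by (auto dest: zdvd_imp_le)
  ultimately show False
    using \<open>\<not> int p dvd n\<close> prime_p by (simp add: prime_dvd_mult_iff)
qed

lemma val_monomials_distinct:
  assumes "a \<in> K" "a \<noteq> 0" "b \<in> K" "b \<noteq> 0" "i < p" "j < p"
    and "v a - int i * m = v b - int j * m"
  shows "i = j"
proof -
  have "i \<le> j" if "a \<in> K" "a \<noteq> 0" "b \<in> K" "b \<noteq> 0" "i < p"
    "v a - int i * m = v b - int j * m" for a b i j
  proof (rule ccontr)
    assume "\<not> i \<le> j"
    then have "int (i - j) * m = v a - v b" using that(6) by (simp add: of_nat_diff algebra_simps)
    then have "int (i - j) * m \<in> val_group" using val_group_diff val_in_val_group that by metis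
    moreover have "0 < i - j" "i - j < p" using \<open>\<not> i \<le> j\<close> that(5) by auto
    ultimately show False using pole_multiple_notin_val_group by blast
  qed
  from this[of a b i j] this[of b a j i] show ?thesis using assms by fastforce
qed

lemma val_y_expansion:
  assumes c: "\<And>j. c j \<in> K" and x: "x = (\<Sum>j<p. c j * y ^ j)" "x \<noteq> 0"
  obtains j0 where "j0 < p" "c j0 \<noteq> 0" "v x = v (c j0) - int j0 * m"
    "\<And>j. j < p \<Longrightarrow> c j \<noteq> 0 \<Longrightarrow> j \<noteq> j0 \<Longrightarrow> v x < v (c j) - int j * m"
proof -
  define J where "J = {j. j < p \<and> c j \<noteq> 0}"
  define t where "t j = c j * y ^ j" for j
  have "x = sum t J" unfolding x(1) t_def J_def by (rule sum.mono_neutral_right) auto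
  have J: "finite J" "J \<noteq> {}"
    using x(2) \<open>x = sum t J\<close> unfolding J_def by (simp, metis empty_Collect_eq sum.empty)
  have t: "t j \<noteq> 0" "v (t j) = v (c j) - int j * m" if "j \<in> J" for j
    using that y_nonzero val_mult[of "c j" "y ^ j"] val_y_power[of j] unfolding J_def t_def by auto
  have inj: "inj_on (\<lambda>j. v (t j)) J"
  proof (rule inj_onI)
    fix i j assume "i \<in> J" "j \<in> J" "v (t i) = v (t j)"
    then show "i = j"
      using val_monomials_distinct[OF c _ c] t(2) unfolding J_def by auto
  qed
  have val_x: "v x = Min ((\<lambda>j. v (t j)) ` J)"
    using val_sum_distinct[OF J t(1) inj] \<open>x = sum t J\<close> by simp
  moreover have "Min ((\<lambda>j. v (t j)) ` J) \<in> (\<lambda>j. v (t j)) ` J"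
    using J by (intro Min_in) auto
  ultimately obtain j0 where j0: "j0 \<in> J" "v x = v (t j0)" by auto
  have dominant: "v x < v (c j) - int j * m" if "j < p" "c j \<noteq> 0" "j \<noteq> j0" for j
  proof -
    have "j \<in> J" using that unfolding J_def by simp
    then have "v x \<le> v (t j)" using val_x J(1) by simp
    moreover have "v (t j) \<noteq> v (t j0)"
      using inj_on_contraD[OF inj that(3) \<open>j \<in> J\<close> j0(1)] .
    ultimately show ?thesis using j0(2) t(2)[OF \<open>j \<in> J\<close>] by simp
  qed
  show ?thesis
  proof (rule that)
    show "j0 < p" "c j0 \<noteq> 0" using j0(1) unfolding J_def by auto
    show "v x = v (c j0) - int j0 * m" using j0 t(2) by simp
  qed (rule dominant)
qed

lemma val_le_y_expansion:
  assumes "\<And>j. c j \<in> K" "x = (\<Sum>j<p. c j * y ^ j)" "x \<noteq> 0" "j < p" "c j \<noteq> 0"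
  shows "v x \<le> v (c j) - int j * m"
proof -
  obtain j0 where "v x = v (c j0) - int j0 * m"
    "\<And>j. j < p \<Longrightarrow> c j \<noteq> 0 \<Longrightarrow> j \<noteq> j0 \<Longrightarrow> v x < v (c j) - int j * m"
    using val_y_expansion[OF assms(1-3)] by blast
  then show ?thesis using assms(4,5) by (cases "j = j0") force+
qed

lemma val_less_y_expansion:
  assumes c: "\<And>j. c j \<in> K" and x: "x = (\<Sum>j<p. c j * y ^ j)" "x \<noteq> 0"
    and "v x \<in> val_group" "0 < j" "j < p" "c j \<noteq> 0"
  shows "v x < v (c j) - int j * m"
proof -
  obtain j0 where j0: "j0 < p" "c j0 \<noteq> 0" "v x = v (c j0) - int j0 * m"
    "\<And>j. j < p \<Longrightarrow> c j \<noteq> 0 \<Longrightarrow> j \<noteq> j0 \<Longrightarrow> v x < v (c j) - int j * m"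
    using val_y_expansion[OF c x] by blast
  have "int j0 * m \<in> val_group"
    using val_group_diff[OF val_in_val_group[OF c j0(2)] \<open>v x \<in> val_group\<close>] j0(3) by simp
  then have "j0 = 0" using pole_multiple_notin_val_group[of j0] j0(1) by auto
  then show ?thesis using j0(4) assms(5-7) by simp
qed

lemma val_y_add_of_nat: "y + of_nat c \<noteq> 0" "v (y + of_nat c) = - m"
proof -
  have "v y + 1 \<le> 0" using val_y m_pos by simp
  then have "val_ge (v y + 1) (of_nat c)" using val_ge_of_nat by (rule val_ge_mono)
  then show "y + of_nat c \<noteq> 0" "v (y + of_nat c) = - m"
    using val_add_eq_left_if_val_ge[OF y_nonzero] val_y by simp_all
qed

lemma val_ge_shift_power_diff:
  assumes "0 < n"
  shows "val_ge (- (int n - 1) * m) ((y + of_nat c) ^ n - y ^ n)"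
proof -
  have "val_ge (- (int n - 1) * m) (y ^ (n - Suc i) * (y + of_nat c) ^ i)" if "i < n" for i
  proof -
    have "val_ge (int (n - Suc i) * (- m) + int i * (- m)) (y ^ (n - Suc i) * (y + of_nat c) ^ i)"
      using val_ge_self[of y] val_ge_self[of "y + of_nat c"] val_y val_y_add_of_nat(2)
      by (intro val_ge_mult val_ge_power) simp_all
    moreover have "int (n - Suc i) * (- m) + int i * (- m) = - (int n - 1) * m"
      using that by (simp add: of_nat_diff algebra_simps)
    ultimately show ?thesis by simp
  qed
  then have "val_ge (0 + - (int n - 1) * m) (of_nat c * (\<Sum>i<n. y ^ (n - Suc i) * (y + of_nat c) ^ i))"
    by (intro val_ge_mult val_ge_of_nat val_ge_sum) simp
  then show ?thesis by (simp add: power_diff_sumr2)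
qed

lemma val_ge_Gal_diff_expansion:
  assumes g: "g \<in> Gal K" and c: "\<And>j. c j \<in> K" and x: "x = (\<Sum>j<p. c j * y ^ j)"
    and B: "\<And>j. 0 < j \<Longrightarrow> j < p \<Longrightarrow> c j \<noteq> 0 \<Longrightarrow> B \<le> v (c j) - int j * m"
  shows "val_ge (B + m) (g x - x)"
proof -
  obtain n where "g y = y + of_nat n" using Gal_shift_y[OF g] by blast
  then have diff: "g x - x = (\<Sum>j<p. c j * ((y + of_nat n) ^ j - y ^ j))"
    unfolding x Gal_apply_y_expansion[OF g c] by (simp add: sum_subtractf right_diff_distrib)
  have "val_ge (B + m) (\<Sum>j<p. c j * ((y + of_nat n) ^ j - y ^ j))"
  proof (rule val_ge_sum)
    fix j assume "j \<in> {..<p}"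
    show "val_ge (B + m) (c j * ((y + of_nat n) ^ j - y ^ j))"
    proof (cases "j = 0 \<or> c j = 0")
      case False
      then have "val_ge (v (c j) + - (int j - 1) * m) (c j * ((y + of_nat n) ^ j - y ^ j))"
        by (intro val_ge_mult val_ge_self val_ge_shift_power_diff) simp
      moreover have "B + m \<le> v (c j) + - (int j - 1) * m"
        using B[of j] \<open>j \<in> {..<p}\<close> False by (simp add: algebra_simps)
      ultimately show ?thesis by (rule val_ge_mono[rotated])
    qed (auto simp: val_ge_0)
  qed
  then show ?thesis unfolding diff .
qed

lemma val_ge_Gal_diff_y_span:
  assumes g: "g \<in> Gal K" and x: "x \<in> y_span" "x \<noteq> 0"
  shows "val_ge (v x + m) (g x - x)"
    and "v x \<in> val_group \<Longrightarrow> val_ge (v x + 1 + m) (g x - x)"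
proof -
  obtain c where c: "\<And>j. c j \<in> K" "x = (\<Sum>j<p. c j * y ^ j)"
    using x(1) unfolding y_span_def by blast
  show "val_ge (v x + m) (g x - x)"
    by (rule val_ge_Gal_diff_expansion[OF g c]) (rule val_le_y_expansion[OF c x(2)])
  assume "v x \<in> val_group"
  show "val_ge (v x + 1 + m) (g x - x)"
  proof (rule val_ge_Gal_diff_expansion[OF g c])
    fix j assume "0 < j" "j < p" "c j \<noteq> 0"
    with val_less_y_expansion[OF c x(2) \<open>v x \<in> val_group\<close>]
    have "v x < v (c j) - int j * m" .
    then show "v x + 1 \<le> v (c j) - int j * m" by simp
  qed
qed

lemma val_Gal_y_span:
  assumes "g \<in> Gal K" "x \<in> y_span" "x \<noteq> 0"
  shows "v (g x) = v x"
proof -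
  have "v x + 1 \<le> v x + m" using m_pos by simp
  then have "val_ge (v x + 1) (g x - x)"
    using val_ge_Gal_diff_y_span(1)[OF assms] by (rule val_ge_mono)
  from val_add_eq_left_if_val_ge(2)[OF assms(3) this] show ?thesis by simp
qed

lemma val_Gal:
  assumes g: "g \<in> Gal K" and "x \<noteq> 0"
  shows "v (g x) = v x"
proof -
  obtain a b where ab: "a \<in> y_span" "b \<in> y_span" "b \<noteq> 0" "x = a / b"
    by (rule y_span_fraction)
  then have "a \<noteq> 0" using \<open>x \<noteq> 0\<close> by auto
  have aut: "field_aut g" using g by (rule field_aut_Gal)
  have "v (g x) = v (g a) - v (g b)"
    using ab \<open>a \<noteq> 0\<close> by (simp add: field_aut_divide[OF aut] field_aut_eq_0_iff[OF aut] val_divide)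
  also have "\<dots> = v x"
    using ab \<open>a \<noteq> 0\<close> val_Gal_y_span[OF g] by (simp add: val_divide)
  finally show ?thesis .
qed

text \<open>Multiplying numerator and denominator by a power of \<open>y\<close> moves the valuation of the
  denominator into the value group of \<open>K\<close>, since \<open>v (y ^ p) = v f\<close>.\<close>

lemma y_span_fraction_val_group:
  assumes "x \<noteq> 0"
  obtains a b where "a \<in> y_span" "b \<in> y_span" "a \<noteq> 0" "b \<noteq> 0" "x = a / b" "v b \<in> val_group"
proof -
  obtain a b where ab: "a \<in> y_span" "b \<in> y_span" "b \<noteq> 0" "x = a / b"
    by (rule y_span_fraction)
  then have "a \<noteq> 0" using assms by auto
  obtain c where c: "\<And>j. c j \<in> K" "b = (\<Sum>j<p. c j * y ^ j)"
    using ab(2) unfolding y_span_def by blast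
  obtain j where j: "j < p" "c j \<noteq> 0" "v b = v (c j) - int j * m"
    using val_y_expansion[OF c ab(3)] by blast
  define t where "t = y ^ (p - j)"
  have t: "t \<in> y_span" "t \<noteq> 0" unfolding t_def using y_span_y_power y_nonzero by simp_all
  have "v (b * t) = v (c j) + v f"
    using val_mult[OF ab(3) t(2)] j(1,3) val_f val_y_power[of "p - j"]
    by (simp add: t_def of_nat_diff algebra_simps)
  also have "\<dots> = v (c j * f)" using val_mult[OF j(2) f_nonzero] by simp
  also have "\<dots> \<in> val_group"
    using val_in_val_group subfieldD(4)[OF subfield_K c(1) f_in_K] j(2) f_nonzero by simp
  finally have "v (b * t) \<in> val_group" .
  moreover have "x = (a * t) / (b * t)" using ab(4) t(2) by simp
  ultimately show ?thesis
    using that[of "a * t" "b * t"] y_span_mult[OF ab(1) t(1)] y_span_mult[OF ab(2) t(1)]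
      \<open>a \<noteq> 0\<close> ab(3) t(2) by simp
qed

lemma val_ge_Gal_diff_integral:
  assumes g: "g \<in> Gal K" and x: "x \<noteq> 0" "0 \<le> v x"
  shows "val_ge (m + 1) (g x - x)"
proof -
  obtain a b where ab: "a \<in> y_span" "b \<in> y_span" "a \<noteq> 0" "b \<noteq> 0" "x = a / b" "v b \<in> val_group"
    using y_span_fraction_val_group[OF x(1)] by blast
  have aut: "field_aut g" using g by (rule field_aut_Gal)
  have gb: "g b \<noteq> 0" "v (g b) = v b"
    using ab field_aut_eq_0_iff[OF aut] val_Gal_y_span[OF g] by auto
  have val_x: "v x = v a - v b" using val_divide[OF ab(3,4)] ab(5) by simp
  define e :: int where "e = (if v a \<in> val_group then 1 else 0)"
  \<comment> \<open>If \<open>v x = 0\<close> then \<open>v a = v b\<close> lies in the value group, so \<open>e = 1\<close>.\<close>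
  have "val_ge (v a + e + m) (g a - a)"
    using val_ge_Gal_diff_y_span[OF g ab(1,3)] unfolding e_def by (cases "v a \<in> val_group") simp_all
  then have left: "val_ge (v a + e + m + v b) ((g a - a) * b)"
    using val_ge_self[of b] by (rule val_ge_mult)
  have "v a + e + m + v b \<le> v a + (v b + 1 + m)" by (simp add: e_def)
  then have right: "val_ge (v a + e + m + v b) (a * (g b - b))"
    using val_ge_mult[OF val_ge_self val_ge_Gal_diff_y_span(2)[OF g ab(2,4,6)]] by (rule val_ge_mono)
  have "val_ge (v a + e + m + v b - v (b * g b)) (((g a - a) * b - a * (g b - b)) / (b * g b))"
    using val_ge_diff[OF left right] by (rule val_ge_divide) (simp add: ab(4) gb(1))
  moreover have "v a + e + m + v b - v (b * g b) = v x + e + m"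
    using val_mult[OF ab(4) gb(1)] gb(2) val_x by simp
  ultimately have "val_ge (v x + e + m) (((g a - a) * b - a * (g b - b)) / (b * g b))"
    by simp
  moreover have "g x - x = ((g a - a) * b - a * (g b - b)) / (b * g b)"
    unfolding ab(5) field_aut_divide[OF aut] using ab(4) gb(1) by (simp add: field_simps)
  moreover have "m + 1 \<le> v x + e + m"
    using x(2) val_x ab(6) unfolding e_def by (cases "v a = v b") auto
  ultimately show ?thesis by (metis val_ge_mono)
qed

lemma Gal_subset_ram_group:
  assumes "int i \<le> m"
  shows "Gal K \<subseteq> ram_group K v i"
proof
  fix g assume g: "g \<in> Gal K"
  have "g x - x = 0 \<or> int i + 1 \<le> v (g x - x)" if "x = 0 \<or> 0 \<le> v x" for x
  proof (cases "x = 0")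
    case True
    then show ?thesis using field_aut_0[OF field_aut_Gal[OF g]] by simp
  next
    case False
    then show ?thesis
      using val_ge_Gal_diff_integral[OF g False] that assms unfolding val_ge_def by auto
  qed
  then show "g \<in> ram_group K v i"
    unfolding ram_group_def using g val_Gal[OF g] by blast
qed

text \<open>The bound comes from \<open>v (g (inverse y) - inverse y) = 2 * m\<close> for \<open>g \<noteq> id\<close>.\<close>

lemma ram_group_bound:
  assumes "g \<in> ram_group K v i" "g \<noteq> id"
  shows "int i + 1 \<le> 2 * m"
proof -
  have g: "g \<in> Gal K" using assms(1) unfolding ram_group_def by simp
  obtain c where c: "c < p" "g y = y + of_nat c" using Gal_shift_y[OF g] by blast
  have "c \<noteq> 0"
    using c Gal_eqI[OF g id_in_Gal _ generates] assms(2) by (metis add_0_right id_apply of_nat_0)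
  then have \<gamma>: "(of_nat c :: 'a) \<noteq> 0"
    using inj_onD[OF inj_on_of_nat_lessThan_CHAR[OF CHAR_p], of c 0] c(1) two_le_p by auto
  have g_inverse_y: "g (inverse y) = inverse (y + of_nat c)"
    using field_aut_inverse[OF field_aut_Gal[OF g]] c(2) by simp
  have diff: "g (inverse y) - inverse y = - of_nat c / ((y + of_nat c) * y)"
    unfolding g_inverse_y using y_nonzero val_y_add_of_nat(1) by (simp add: field_simps)
  have "0 \<le> v (inverse y)" using val_inverse[OF y_nonzero] val_y m_pos by simp
  then have "g (inverse y) - inverse y = 0 \<or> int i + 1 \<le> v (g (inverse y) - inverse y)"
    using assms(1) unfolding ram_group_def by blast
  moreover have "g (inverse y) - inverse y \<noteq> 0"
    unfolding diff using \<gamma> y_nonzero val_y_add_of_nat(1) by simp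
  moreover have "v (g (inverse y) - inverse y) = 2 * m"
    unfolding diff using \<gamma> y_nonzero val_y_add_of_nat[of c] val_of_nat[OF \<gamma>] val_y
    by (simp add: val_divide val_mult val_uminus)
  ultimately show ?thesis by simp
qed

lemma dprime_ge: "(int p - 1) * m \<le> int (dprime K v)"
proof -
  define I where "I = {i. 1 \<le> i \<and> 1 < card (ram_group K v i)}"
  have ram_group_Gal: "ram_group K v i = Gal K" if "int i \<le> m" for i
    using Gal_subset_ram_group[OF that] unfolding ram_group_def by blast
  have "I \<subseteq> {..nat (2 * m)}"
  proof
    fix i assume "i \<in> I"
    then have "\<not> ram_group K v i \<subseteq> {id}"
      unfolding I_def using card_mono[of "{id}" "ram_group K v i"] by auto
    then show "i \<in> {..nat (2 * m)}" using ram_group_bound by fastforce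
  qed
  then have "finite I" by (rule finite_subset) simp
  moreover have "{1..nat m} \<subseteq> I"
    using ram_group_Gal card_Gal two_le_p unfolding I_def by auto
  ultimately have "(\<Sum>i\<in>{1..nat m}. card (ram_group K v i) - 1) \<le> dprime K v"
    unfolding dprime_def I_def[symmetric] by (rule sum_mono2) simp
  moreover have "(\<Sum>i\<in>{1..nat m}. card (ram_group K v i) - 1) = (\<Sum>i\<in>{1..nat m}. p - 1)"
    using ram_group_Gal card_Gal by (intro sum.cong refl) auto
  ultimately have "nat m * (p - 1) \<le> dprime K v" by simp
  then have "int (nat m * (p - 1)) \<le> int (dprime K v)" by (rule of_nat_mono)
  moreover have "int (nat m * (p - 1)) = (int p - 1) * m" using m_pos two_le_p by (simp add: of_nat_diff)
  ultimately show ?thesis by simp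
qed

end

context AS_extension
begin

lemma val_y_power_pred_ge_dprime:
  assumes "subfield k" "dval k UNIV v" "\<forall>w. dval k K w \<longrightarrow> local_standard_form p f w"
  shows "- int (dprime K v) \<le> v (y ^ (p - 1))"
proof -
  interpret discrete_valuation k v using assms(1,2) by unfold_locales
  have val: "v (y ^ (p - 1)) = int (p - 1) * v y" using val_power[OF y_nonzero] .
  show ?thesis
  proof (cases "v y < 0")
    case True
    interpret AS_pole k K p y f \<sigma> v "- v y"
      using assms(3) True by unfold_locales auto
    show ?thesis using dprime_ge val two_le_p by (simp add: of_nat_diff algebra_simps)
  next
    case False
    then have "0 \<le> int (p - 1) * v y" by simp
    then show ?thesis using val by linarith
  qed
qed

lemma magical_y_power_pred:
  assumes "subfield k" "\<forall>w. dval k K w \<longrightarrow> local_standard_form p f w"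
  shows "magical k K (y ^ (p - 1))"
  unfolding magical_def using val_y_power_pred_ge_dprime[OF assms(1) _ assms(2)] trace_y_power_pred
  by simp

end

theorem lemma7p2:
  fixes k K :: "'a::field set" and p :: nat and y f :: 'a and \<sigma> :: "'a \<Rightarrow> 'a"
  assumes "prime p" and "CHAR('a) = p"
    and "alg_closed_subfield k"
    and "function_field k K"
    and "AS_generator p K y f \<sigma>"
    and "global_standard_form p k K f"
  shows "magical k K (y ^ (p - 1)) \<and>
         (\<forall>g1\<in>Gal K. \<forall>g2\<in>Gal K.
            trace K (g1 (y ^ (p - 1)) * g2 (y ^ (p - 1) - 2)) = (if g1 = g2 then 1 else 0))"
proof -
  have "subfield k" "subfield K" using assms(4) unfolding function_field_def by auto
  interpret AS_extension K p y f \<sigma>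
    using assms(1,2,5) \<open>subfield K\<close> by unfold_locales
  have "\<forall>w. dval k K w \<longrightarrow> local_standard_form p f w"
    using assms(6) unfolding global_standard_form_def by blast
  then show ?thesis
    using magical_y_power_pred[OF \<open>subfield k\<close>] trace_pairing_y_power_pred by blast
qed

end
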